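(* Let $G$ be a countably infinite disconnected IH-homogeneous graph. Then there exist $n,m\in\omega+1$ (each either a positive integer or $\omega$) with $\max\{m,n\}=\omega$ such that $G\cong I_n[K_m]$.
   Context: All graphs are undirected and loopless; subgraphs are induced. $G$ is IH-homogeneous if every isomorphism between finite induced subgraphs of $G$ is the restriction of an endomorphism of $G$ (a map $G\to G$ sending adjacent vertices to adjacent vertices). $K_\kappa$ is the complete graph and $I_\kappa$ the edgeless graph on $\kappa$ vertices; the lexicographic product $G[H]$ has vertex set $G\times H$ with $(g,h)\sim(g',h')$ iff $g\sim g'$, or $g=g'$ and $h\sim h'$; so $I_n[K_m]$ is a disjoint union of $n$ copies of $K_m$. *)

theory Defs
  imports Main "HOL-Library.Extended_Nat" "HOL-Library.Countable_Set"
begin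

definition graph :: "'a set \<Rightarrow> ('a \<Rightarrow> 'a \<Rightarrow> bool) \<Rightarrow> bool" where
  "graph V E \<longleftrightarrow> (\<forall>x y. E x y \<longrightarrow> x \<in> V \<and> y \<in> V \<and> E y x \<and> x \<noteq> y)"

definition endomorphism :: "'a set \<Rightarrow> ('a \<Rightarrow> 'a \<Rightarrow> bool) \<Rightarrow> ('a \<Rightarrow> 'a) \<Rightarrow> bool" where
  "endomorphism V E f \<longleftrightarrow> f ` V \<subseteq> V \<and> (\<forall>x\<in>V. \<forall>y\<in>V. E x y \<longrightarrow> E (f x) (f y))"

definition induced_iso :: "('a \<Rightarrow> 'a \<Rightarrow> bool) \<Rightarrow> 'a set \<Rightarrow> 'a set \<Rightarrow> ('a \<Rightarrow> 'a) \<Rightarrow> bool" where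
  "induced_iso E A B h \<longleftrightarrow> bij_betw h A B \<and> (\<forall>x\<in>A. \<forall>y\<in>A. E x y \<longleftrightarrow> E (h x) (h y))"

definition IH_homogeneous :: "'a set \<Rightarrow> ('a \<Rightarrow> 'a \<Rightarrow> bool) \<Rightarrow> bool" where
  "IH_homogeneous V E \<longleftrightarrow>
     (\<forall>A B h. finite A \<and> finite B \<and> A \<subseteq> V \<and> B \<subseteq> V \<and> induced_iso E A B h \<longrightarrow>
        (\<exists>f. endomorphism V E f \<and> (\<forall>x\<in>A. f x = h x)))"

definition connected_graph :: "'a set \<Rightarrow> ('a \<Rightarrow> 'a \<Rightarrow> bool) \<Rightarrow> bool" where
  "connected_graph V E \<longleftrightarrow> V \<noteq> {} \<and> (\<forall>x\<in>V. \<forall>y\<in>V. E\<^sup>*\<^sup>* x y)"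

definition graph_iso :: "'a set \<Rightarrow> ('a \<Rightarrow> 'a \<Rightarrow> bool) \<Rightarrow> 'b set \<Rightarrow> ('b \<Rightarrow> 'b \<Rightarrow> bool) \<Rightarrow> bool" where
  "graph_iso V E W F \<longleftrightarrow> (\<exists>f. bij_betw f V W \<and> (\<forall>x\<in>V. \<forall>y\<in>V. E x y \<longleftrightarrow> F (f x) (f y)))"

text \<open>Vertex set {0,1,...} of size \<kappa> \<in> \<omega>+1 (here \<kappa> :: enat, \<infinity> = \<omega>).\<close>
definition card_verts :: "enat \<Rightarrow> nat set" where
  "card_verts \<kappa> = {i. enat i < \<kappa>}"

definition K_edges :: "nat \<Rightarrow> nat \<Rightarrow> bool" where "K_edges i j \<longleftrightarrow> i \<noteq> j"
definition I_edges :: "nat \<Rightarrow> nat \<Rightarrow> bool" where "I_edges i j \<longleftrightarrow> False"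

definition lex_verts :: "'a set \<Rightarrow> 'b set \<Rightarrow> ('a \<times> 'b) set" where
  "lex_verts V W = V \<times> W"
definition lex_edges :: "('a \<Rightarrow> 'a \<Rightarrow> bool) \<Rightarrow> ('b \<Rightarrow> 'b \<Rightarrow> bool) \<Rightarrow> ('a \<times> 'b) \<Rightarrow> ('a \<times> 'b) \<Rightarrow> bool" where
  "lex_edges E F p q \<longleftrightarrow> E (fst p) (fst q) \<or> (fst p = fst q \<and> F (snd p) (snd q))"

end

theory Submission
  imports Defs
begin

text \<open>If two distinct non-adjacent vertices x, y lay in one component, the partial isomorphism
  fixing x and sending y outside that component would extend to an endomorphism; but endomorphisms
  preserve paths. So every component is complete. Extending a one-point map a \<mapsto> b gives an
  endomorphism that maps the clique of a injectively into the clique of b, so all cliques have the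
  same size m. With n the number of cliques, G is I_n[K_m], and n or m is infinite because
  V is.\<close>

definition ecard :: "'b set \<Rightarrow> enat" where
  "ecard S = (if finite S then enat (card S) else \<infinity>)"

lemma bij_betw_to_nat_on_card_verts_ecard:
  assumes "countable S"
  shows "bij_betw (to_nat_on S) S (card_verts (ecard S))"
proof (cases "finite S")
  case True
  then have "card_verts (ecard S) = {..<card S}" by (auto simp: ecard_def card_verts_def)
  then show ?thesis using to_nat_on_finite[OF True] by simp
next
  case False
  then have "card_verts (ecard S) = UNIV" by (auto simp: ecard_def card_verts_def)
  then show ?thesis using to_nat_on_infinite[OF assms False] by simp
qed

lemma ecard_mono_inj_on:
  assumes "inj_on f A" and "f ` A \<subseteq> B"
  shows "ecard A \<le> ecard B"
proof (cases "finite B")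
  case True
  then have "finite A" using assms inj_on_finite by blast
  moreover have "card A \<le> card B" using card_inj_on_le assms True by blast
  ultimately show ?thesis using True by (simp add: ecard_def)
qed (simp add: ecard_def)

lemma one_le_ecard: "S \<noteq> {} \<Longrightarrow> 1 \<le> ecard S"
  by (auto simp: ecard_def one_enat_def Suc_le_eq card_gt_0_iff)

lemma ecard_eq_infinity_iff: "ecard S = \<infinity> \<longleftrightarrow> infinite S"
  by (simp add: ecard_def)

lemma graph_symD: "graph V E \<Longrightarrow> E x y \<Longrightarrow> E y x"
  and graph_irreflD: "graph V E \<Longrightarrow> \<not> E x x"
  and graph_edgeD: "graph V E \<Longrightarrow> E x y \<Longrightarrow> x \<in> V \<and> y \<in> V"
  by (auto simp: graph_def)

lemma graph_rtranclp_sym: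
  assumes "graph V E" and "E\<^sup>*\<^sup>* x y"
  shows "E\<^sup>*\<^sup>* y x"
  using assms(2)
  by induction (auto intro: converse_rtranclp_into_rtranclp graph_symD[OF assms(1)])

lemma not_connected_graph_unreachable:
  assumes "graph V E" and "\<not> connected_graph V E" and "x \<in> V"
  obtains w where "w \<in> V" and "\<not> E\<^sup>*\<^sup>* x w"
proof -
  have "\<exists>w\<in>V. \<not> E\<^sup>*\<^sup>* x w"
  proof (rule ccontr)
    assume "\<not> ?thesis"
    then have from_x: "E\<^sup>*\<^sup>* x w" if "w \<in> V" for w
      using that by blast
    have "E\<^sup>*\<^sup>* y z" if "y \<in> V" "z \<in> V" for y z
      using graph_rtranclp_sym[OF assms(1) from_x[OF that(1)]] from_x[OF that(2)]
      by (rule rtranclp_trans)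
    then show False using assms(2,3) unfolding connected_graph_def by blast
  qed
  then show ?thesis using that by blast
qed

lemma endomorphism_rtranclp:
  assumes "graph V E" and "endomorphism V E f" and "E\<^sup>*\<^sup>* x y"
  shows "E\<^sup>*\<^sup>* (f x) (f y)"
  using assms(3)
proof induction
  case (step y z)
  have "y \<in> V" "z \<in> V" using graph_edgeD[OF assms(1) step(2)] by auto
  then have "E (f y) (f z)" using assms(2) step(2) unfolding endomorphism_def by blast
  with step.IH show ?case by (rule rtranclp.rtrancl_into_rtrancl)
qed simp

lemma IH_homogeneousD:
  assumes "IH_homogeneous V E" and "finite A" and "A \<subseteq> V" and "h ` A \<subseteq> V"
    and "induced_iso E A (h ` A) h"
  obtains f where "endomorphism V E f" and "\<And>x. x \<in> A \<Longrightarrow> f x = h x"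
  using assms(1)[unfolded IH_homogeneous_def, rule_format, of A "h ` A" h] assms(2-5) that
  by auto

lemma IH_homogeneous_endomorphism_to:
  assumes "graph V E" and "IH_homogeneous V E" and "a \<in> V" and "b \<in> V"
  obtains f where "endomorphism V E f" and "f a = b"
proof -
  have "induced_iso E {a} ((\<lambda>_. b) ` {a}) (\<lambda>_. b)"
    using graph_irreflD[OF assms(1)] by (auto simp: induced_iso_def bij_betw_def)
  then obtain f where "endomorphism V E f" "\<And>x. x \<in> {a} \<Longrightarrow> f x = b"
    using IH_homogeneousD[OF assms(2), of "{a}" "\<lambda>_. b"] assms(3,4) by auto
  then show ?thesis using that by blast
qed

lemma IH_homogeneous_reachable_imp_adjacent:
  assumes g: "graph V E" and ih: "IH_homogeneous V E" and "\<not> connected_graph V E"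
    and "x \<in> V" and "y \<in> V" and "x \<noteq> y" and reach: "E\<^sup>*\<^sup>* x y"
  shows "E x y"
proof (rule ccontr)
  assume "\<not> E x y"
  obtain w where w: "w \<in> V" "\<not> E\<^sup>*\<^sup>* x w"
    using not_connected_graph_unreachable[OF g assms(3,4)] .
  define h where "h z = (if z = y then w else z)" for z
  have "h ` {x, y} = {x, w}" using \<open>x \<noteq> y\<close> by (auto simp: h_def)
  moreover have "induced_iso E {x, y} {x, w} h"
    using \<open>\<not> E x y\<close> \<open>x \<noteq> y\<close> w graph_symD[OF g] graph_irreflD[OF g]
    unfolding induced_iso_def bij_betw_def inj_on_def h_def by auto
  ultimately obtain f where f: "endomorphism V E f" "\<And>z. z \<in> {x, y} \<Longrightarrow> f z = h z"
    using IH_homogeneousD[OF ih, of "{x, y}" h] assms(4,5) w(1) by auto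
  have "E\<^sup>*\<^sup>* (f x) (f y)" using endomorphism_rtranclp[OF g f(1) reach] .
  moreover have "f x = x" "f y = w" using f(2)[of x] f(2)[of y] \<open>x \<noteq> y\<close> by (simp_all add: h_def)
  ultimately show False using w(2) by simp
qed

locale cluster_graph =
  fixes V :: "'a set" and E :: "'a \<Rightarrow> 'a \<Rightarrow> bool"
  assumes graph: "graph V E"
    and adjacent_trans: "E x y \<Longrightarrow> E y z \<Longrightarrow> x \<noteq> z \<Longrightarrow> E x z"
begin

definition clique :: "'a \<Rightarrow> 'a set" where
  "clique x = {y \<in> V. x = y \<or> E x y}"

lemma clique_subset: "clique x \<subseteq> V"
  by (auto simp: clique_def)

lemma self_in_clique: "x \<in> V \<Longrightarrow> x \<in> clique x"
  by (simp add: clique_def)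

lemma clique_eqI: "y \<in> clique x \<Longrightarrow> clique y = clique x"
  using adjacent_trans graph_symD[OF graph] unfolding clique_def by blast

lemma clique_eq_iff: "x \<in> V \<Longrightarrow> y \<in> V \<Longrightarrow> clique x = clique y \<longleftrightarrow> x = y \<or> E x y"
  using clique_eqI self_in_clique unfolding clique_def by blast

lemma Union_cliques: "\<Union> (clique ` V) = V"
  using self_in_clique clique_subset by blast

lemma endomorphism_clique_into_clique:
  assumes f: "endomorphism V E f" and "x \<in> V"
  shows "inj_on f (clique x)" and "f ` clique x \<subseteq> clique (f x)"
proof -
  have adj: "E (f y) (f z)" if yz: "y \<in> clique x" "z \<in> clique x" "y \<noteq> z" for y z
  proof -
    have "y \<in> V" "z \<in> V" using yz clique_subset by auto
    moreover have "clique y = clique z" using clique_eqI yz(1,2) by simp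
    ultimately have "E y z" using clique_eq_iff yz(3) by blast
    with f \<open>y \<in> V\<close> \<open>z \<in> V\<close> show ?thesis unfolding endomorphism_def by blast
  qed
  show "inj_on f (clique x)"
  proof (rule inj_onI, rule ccontr)
    fix y z assume "y \<in> clique x" "z \<in> clique x" "f y = f z" "y \<noteq> z"
    then show False using adj graph_irreflD[OF graph] by metis
  qed
  show "f ` clique x \<subseteq> clique (f x)"
  proof
    fix w assume "w \<in> f ` clique x"
    then obtain y where y: "y \<in> clique x" "w = f y" by blast
    then have "f y \<in> V" using f clique_subset unfolding endomorphism_def by blast
    moreover have "f x = f y \<or> E (f x) (f y)" using adj self_in_clique[OF assms(2)] y(1) by blast
    ultimately show "w \<in> clique (f x)" using y(2) by (simp add: clique_def)
  qed
qed

definition lex_coord :: "'a \<Rightarrow> nat \<times> nat" where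
  "lex_coord x = (to_nat_on (clique ` V) (clique x), to_nat_on (clique x) x)"

context
  assumes countable: "countable V"
begin

lemma countable_clique: "countable (clique x)"
  using countable clique_subset by (rule countable_subset[rotated])

lemma lex_coord_eq_iff:
  assumes "x \<in> V" and "y \<in> V"
  shows "lex_coord x = lex_coord y \<longleftrightarrow> x = y"
    and "fst (lex_coord x) = fst (lex_coord y) \<longleftrightarrow> clique x = clique y"
proof -
  show fst_iff: "fst (lex_coord x) = fst (lex_coord y) \<longleftrightarrow> clique x = clique y"
    using inj_on_to_nat_on[of "clique ` V"] countable assms
    unfolding lex_coord_def inj_on_def by auto
  have "to_nat_on (clique x) x = to_nat_on (clique x) y \<Longrightarrow> y \<in> clique x \<Longrightarrow> x = y"
    using inj_on_to_nat_on[OF countable_clique] self_in_clique[OF assms(1)]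
    unfolding inj_on_def by blast
  then show "lex_coord x = lex_coord y \<longleftrightarrow> x = y"
    using fst_iff self_in_clique[OF assms(2)] by (auto simp: lex_coord_def prod_eq_iff)
qed

lemma adjacent_iff_lex_coord:
  assumes "x \<in> V" and "y \<in> V"
  shows "E x y \<longleftrightarrow> lex_edges I_edges K_edges (lex_coord x) (lex_coord y)"
proof -
  have "lex_edges I_edges K_edges (lex_coord x) (lex_coord y)
        \<longleftrightarrow> fst (lex_coord x) = fst (lex_coord y) \<and> lex_coord x \<noteq> lex_coord y"
    by (auto simp: lex_edges_def I_edges_def K_edges_def prod_eq_iff)
  also have "\<dots> \<longleftrightarrow> clique x = clique y \<and> x \<noteq> y"
    using lex_coord_eq_iff[OF assms] by simp
  also have "\<dots> \<longleftrightarrow> E x y"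
    using clique_eq_iff[OF assms] graph_irreflD[OF graph] by auto
  finally show ?thesis ..
qed

lemma lex_coord_image:
  assumes ecard_clique: "\<And>x. x \<in> V \<Longrightarrow> ecard (clique x) = m"
  shows "lex_coord ` V = card_verts (ecard (clique ` V)) \<times> card_verts m"
proof -
  have cliques: "bij_betw (to_nat_on (clique ` V)) (clique ` V) (card_verts (ecard (clique ` V)))"
    using bij_betw_to_nat_on_card_verts_ecard countable by blast
  have within: "bij_betw (to_nat_on (clique x)) (clique x) (card_verts m)" if "x \<in> V" for x
    using bij_betw_to_nat_on_card_verts_ecard[OF countable_clique, of x] ecard_clique[OF that]
    by simp
  show ?thesis
  proof (intro equalityI subsetI)
    fix p assume "p \<in> lex_coord ` V"
    then show "p \<in> card_verts (ecard (clique ` V)) \<times> card_verts m"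
      using bij_betwE[OF cliques] bij_betwE[OF within] self_in_clique
      by (auto simp: lex_coord_def)
  next
    fix p assume "p \<in> card_verts (ecard (clique ` V)) \<times> card_verts m"
    then have "fst p \<in> to_nat_on (clique ` V) ` clique ` V"
      using bij_betw_imp_surj_on[OF cliques] by auto
    then obtain a where a: "a \<in> V" "fst p = to_nat_on (clique ` V) (clique a)"
      by blast
    have "snd p \<in> to_nat_on (clique a) ` clique a"
      using bij_betw_imp_surj_on[OF within[OF a(1)]] \<open>p \<in> _\<close> by auto
    then obtain x where x: "x \<in> clique a" "snd p = to_nat_on (clique a) x"
      by blast
    then have "x \<in> V" "clique x = clique a" using clique_subset clique_eqI by auto
    then show "p \<in> lex_coord ` V"
      using a x by (auto simp: lex_coord_def prod_eq_iff intro!: image_eqI[of p _ x])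
  qed
qed

theorem graph_iso_lex_I_K:
  assumes "\<And>x. x \<in> V \<Longrightarrow> ecard (clique x) = m"
  shows "graph_iso V E (lex_verts (card_verts (ecard (clique ` V))) (card_verts m))
           (lex_edges I_edges K_edges)"
  unfolding graph_iso_def lex_verts_def bij_betw_def
  using lex_coord_eq_iff(1) lex_coord_image[OF assms] adjacent_iff_lex_coord
  by (intro exI[of _ lex_coord]) (auto intro: inj_onI)

end

lemma infinite_imp_max_ecard_infinity:
  assumes "infinite V" and ecard_clique: "\<And>x. x \<in> V \<Longrightarrow> ecard (clique x) = m"
  shows "max (ecard (clique ` V)) m = \<infinity>"
proof (cases "finite (clique ` V)")
  case True
  have "\<not> (\<forall>C \<in> clique ` V. finite C)"
    using finite_Union[OF True] assms(1) Union_cliques by auto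
  then obtain x where "x \<in> V" "infinite (clique x)" by auto
  then have "m = \<infinity>" using ecard_clique ecard_eq_infinity_iff by metis
  then show ?thesis by simp
next
  case False
  then have "ecard (clique ` V) = \<infinity>" by (simp add: ecard_eq_infinity_iff)
  then show ?thesis by simp
qed

lemma IH_homogeneous_ecard_clique_eq:
  assumes "IH_homogeneous V E" and "x \<in> V" and "y \<in> V"
  shows "ecard (clique x) = ecard (clique y)"
proof -
  have "ecard (clique a) \<le> ecard (clique b)" if ab: "a \<in> V" "b \<in> V" for a b
  proof -
    obtain f where "endomorphism V E f" "f a = b"
      using IH_homogeneous_endomorphism_to[OF graph assms(1) ab] .
    then show ?thesis
      using endomorphism_clique_into_clique ab(1) ecard_mono_inj_on by metis
  qed
  then show ?thesis using assms(2,3) by (meson order_antisym)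
qed

end

lemma IH_homogeneous_disconnected_cluster_graph:
  assumes "graph V E" and "IH_homogeneous V E" and "\<not> connected_graph V E"
  shows "cluster_graph V E"
proof -
  have "E x z" if "E x y" "E y z" "x \<noteq> z" for x y z
  proof -
    have "E\<^sup>*\<^sup>* x z" using that by (meson rtranclp.rtrancl_into_rtrancl r_into_rtranclp)
    then show ?thesis
      using IH_homogeneous_reachable_imp_adjacent[OF assms] graph_edgeD[OF assms(1)] that
      by blast
  qed
  then show ?thesis using assms(1) by (simp add: cluster_graph_def)
qed

theorem lemma3p1:
  fixes V :: "'a set" and E :: "'a \<Rightarrow> 'a \<Rightarrow> bool"
  assumes "graph V E"
    and "countable V" and "infinite V"
    and "\<not> connected_graph V E"
    and "IH_homogeneous V E"
  shows "\<exists>n m :: enat. n \<ge> 1 \<and> m \<ge> 1 \<and> max n m = \<infinity> \<and>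
           graph_iso V E (lex_verts (card_verts n) (card_verts m)) (lex_edges I_edges K_edges)"
proof -
  interpret cluster_graph V E
    using IH_homogeneous_disconnected_cluster_graph assms(1,5,4) .
  obtain a where a: "a \<in> V" using infinite_imp_nonempty[OF assms(3)] by blast
  define m where "m = ecard (clique a)"
  have ecard_clique: "ecard (clique x) = m" if "x \<in> V" for x
    unfolding m_def using IH_homogeneous_ecard_clique_eq[OF assms(5) that a] .
  have "clique ` V \<noteq> {}" and "clique a \<noteq> {}" using a self_in_clique[OF a] by blast+
  then have "ecard (clique ` V) \<ge> 1" and "m \<ge> 1" unfolding m_def by (simp_all add: one_le_ecard)
  moreover have "max (ecard (clique ` V)) m = \<infinity>"
    using infinite_imp_max_ecard_infinity[OF assms(3) ecard_clique] .
  moreover have "graph_iso V E (lex_verts (card_verts (ecard (clique ` V))) (card_verts m))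
                   (lex_edges I_edges K_edges)"
    using graph_iso_lex_I_K[OF assms(2) ecard_clique] .
  ultimately show ?thesis by blast
qed

end
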